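(* Let $\mathcal F$ be a prime lattice filter of an MV-algebra $\mathcal L$. Then $\mathcal K(\mathcal F)\sqsubseteq\!\!\to\mathcal F=\mathcal F$.
   Context: $\mathcal L=(L,\oplus,\lnot,0)$ is an MV-algebra. We write $1=\lnot0$, $x\otimes y=\lnot(\lnot x\oplus\lnot y)$, and $x\to y=\lnot x\oplus y$, and use the usual lattice order. A lattice filter is a nonempty upward-closed subset closed under $\wedge$. It is prime if it is proper and $a\vee b\in\mathcal F$ implies $a\in\mathcal F$ or $b\in\mathcal F$. For an upward-closed set $\mathcal F$ and $a\in L$, let $\mathcal F_a=\{z: z\to a\notin\mathcal F\}$. The kernel of $\mathcal F$ is $\mathcal K(\mathcal F)=\{z : \forall a\notin\mathcal F,\ z\to a\notin\mathcal F\}$, which is contained in $\mathcal F$. For $\mathcal H\subseteq\mathcal G$ we put $\mathcal H\sqsubseteq\!\!\to\mathcal G=\bigcap_{a\in L\setminus\mathcal G}\mathcal H_a$, and in general $\mathcal H\sqsubseteq\!\!\to\mathcal G:=(\mathcal H\cap\mathcal G)\sqsubseteq\!\!\to\mathcal G$. *)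

theory Defs
  imports Main
begin

definition mv_algebra :: "('a \<Rightarrow> 'a \<Rightarrow> 'a) \<Rightarrow> ('a \<Rightarrow> 'a) \<Rightarrow> 'a \<Rightarrow> bool" where
  "mv_algebra oplus neg zero \<longleftrightarrow>
     (\<forall>x y z. oplus (oplus x y) z = oplus x (oplus y z)) \<and>
     (\<forall>x y. oplus x y = oplus y x) \<and>
     (\<forall>x. oplus x zero = x) \<and>
     (\<forall>x. neg (neg x) = x) \<and>
     (\<forall>x. oplus x (neg zero) = neg zero) \<and>
     (\<forall>x y. oplus (neg (oplus (neg x) y)) y = oplus (neg (oplus (neg y) x)) x)"

definition mv_one :: "('a \<Rightarrow> 'a) \<Rightarrow> 'a \<Rightarrow> 'a" where
  "mv_one neg zero = neg zero"

definition mv_otimes :: "('a \<Rightarrow> 'a \<Rightarrow> 'a) \<Rightarrow> ('a \<Rightarrow> 'a) \<Rightarrow> 'a \<Rightarrow> 'a \<Rightarrow> 'a" where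
  "mv_otimes oplus neg x y = neg (oplus (neg x) (neg y))"

definition mv_imp :: "('a \<Rightarrow> 'a \<Rightarrow> 'a) \<Rightarrow> ('a \<Rightarrow> 'a) \<Rightarrow> 'a \<Rightarrow> 'a \<Rightarrow> 'a" where
  "mv_imp oplus neg x y = oplus (neg x) y"

definition mv_le :: "('a \<Rightarrow> 'a \<Rightarrow> 'a) \<Rightarrow> ('a \<Rightarrow> 'a) \<Rightarrow> 'a \<Rightarrow> 'a \<Rightarrow> 'a \<Rightarrow> bool" where
  "mv_le oplus neg zero x y \<longleftrightarrow> mv_imp oplus neg x y = mv_one neg zero"

definition mv_inf :: "('a \<Rightarrow> 'a \<Rightarrow> 'a) \<Rightarrow> ('a \<Rightarrow> 'a) \<Rightarrow> 'a \<Rightarrow> 'a \<Rightarrow> 'a" where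
  "mv_inf oplus neg x y = mv_otimes oplus neg x (oplus (neg x) y)"

definition mv_sup :: "('a \<Rightarrow> 'a \<Rightarrow> 'a) \<Rightarrow> ('a \<Rightarrow> 'a) \<Rightarrow> 'a \<Rightarrow> 'a \<Rightarrow> 'a" where
  "mv_sup oplus neg x y = oplus (neg (oplus (neg x) y)) y"

definition upward_closed :: "('a \<Rightarrow> 'a \<Rightarrow> 'a) \<Rightarrow> ('a \<Rightarrow> 'a) \<Rightarrow> 'a \<Rightarrow> 'a set \<Rightarrow> bool" where
  "upward_closed oplus neg zero F \<longleftrightarrow>
     (\<forall>x y. x \<in> F \<longrightarrow> mv_le oplus neg zero x y \<longrightarrow> y \<in> F)"

definition lattice_filter :: "('a \<Rightarrow> 'a \<Rightarrow> 'a) \<Rightarrow> ('a \<Rightarrow> 'a) \<Rightarrow> 'a \<Rightarrow> 'a set \<Rightarrow> bool" where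
  "lattice_filter oplus neg zero F \<longleftrightarrow>
     F \<noteq> {} \<and> upward_closed oplus neg zero F \<and>
     (\<forall>x y. x \<in> F \<longrightarrow> y \<in> F \<longrightarrow> mv_inf oplus neg x y \<in> F)"

definition prime_lattice_filter :: "('a \<Rightarrow> 'a \<Rightarrow> 'a) \<Rightarrow> ('a \<Rightarrow> 'a) \<Rightarrow> 'a \<Rightarrow> 'a set \<Rightarrow> bool" where
  "prime_lattice_filter oplus neg zero F \<longleftrightarrow>
     lattice_filter oplus neg zero F \<and> F \<noteq> UNIV \<and>
     (\<forall>a b. mv_sup oplus neg a b \<in> F \<longrightarrow> a \<in> F \<or> b \<in> F)"

definition sub_at :: "('a \<Rightarrow> 'a \<Rightarrow> 'a) \<Rightarrow> ('a \<Rightarrow> 'a) \<Rightarrow> 'a set \<Rightarrow> 'a \<Rightarrow> 'a set" where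
  "sub_at oplus neg F a = {z. mv_imp oplus neg z a \<notin> F}"

definition kernel :: "('a \<Rightarrow> 'a \<Rightarrow> 'a) \<Rightarrow> ('a \<Rightarrow> 'a) \<Rightarrow> 'a set \<Rightarrow> 'a set" where
  "kernel oplus neg F = {z. \<forall>a. a \<notin> F \<longrightarrow> mv_imp oplus neg z a \<notin> F}"

definition sqimp :: "('a \<Rightarrow> 'a \<Rightarrow> 'a) \<Rightarrow> ('a \<Rightarrow> 'a) \<Rightarrow> 'a set \<Rightarrow> 'a set \<Rightarrow> 'a set" where
  "sqimp oplus neg H G = (\<Inter>a \<in> - G. sub_at oplus neg (H \<inter> G) a)"

end

theory Submission
  imports Defs
begin

(* The identity K(F) \<sqsubseteq>\<rightarrow> F = F holds for every nonempty upward-closed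
   subset F of an MV-algebra.
   Three MV-identities drive the argument: x \<rightarrow> x = 1, 1 \<rightarrow> a = a, and
   z \<le> (z \<rightarrow> a) \<rightarrow> a.
   (1) "\<subseteq>": if 1 \<in> H \<inter> G, then H \<sqsubseteq>\<rightarrow> G \<subseteq> G, because for z \<notin> G the element
       z \<rightarrow> z = 1 lies in H \<inter> G, so z fails the condition indexed by a = z.
       Both 1 \<in> F (F is nonempty and upward closed) and 1 \<in> K(F)
       (as 1 \<rightarrow> a = a) hold.
   (2) "\<supseteq>": if z \<in> F, a \<notin> F and z \<rightarrow> a were in K(F), then (z \<rightarrow> a) \<rightarrow> a \<notin> F
       by definition of the kernel, although it lies above z \<in> F. *)

text \<open>Complementation law \<not>y \<oplus> y = 1, obtained from Chang's last axiom
  instantiated at x = 1.\<close>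
lemma mv_oplus_neg_self:
  assumes "mv_algebra oplus neg zero"
  shows "oplus (neg y) y = neg zero"
proof -
  note ax = assms[unfolded mv_algebra_def]
  have "oplus (neg (oplus (neg (neg zero)) y)) y
      = oplus (neg (oplus (neg y) (neg zero))) (neg zero)"
    using ax by blast
  then show ?thesis
    using ax by metis
qed

lemma mv_imp_self:
  assumes "mv_algebra oplus neg zero"
  shows "mv_imp oplus neg x x = mv_one neg zero"
  using mv_oplus_neg_self[OF assms] unfolding mv_imp_def mv_one_def .

lemma mv_imp_one_left:
  assumes "mv_algebra oplus neg zero"
  shows "mv_imp oplus neg (mv_one neg zero) a = a"
  using assms unfolding mv_algebra_def mv_imp_def mv_one_def by metis

lemma mv_le_imp_imp:
  assumes "mv_algebra oplus neg zero"
  shows "mv_le oplus neg zero z (mv_imp oplus neg (mv_imp oplus neg z a) a)"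
proof -
  note ax = assms[unfolded mv_algebra_def]
  have "oplus (neg z) (oplus (neg (oplus (neg z) a)) a)
      = oplus (neg (neg (oplus (neg z) a))) (neg (oplus (neg z) a))"
    using ax by metis
  also have "\<dots> = neg zero"
    by (rule mv_oplus_neg_self[OF assms])
  finally show ?thesis
    unfolding mv_le_def mv_imp_def mv_one_def .
qed

lemma mv_one_in_upward_closed:
  assumes "mv_algebra oplus neg zero"
    and "upward_closed oplus neg zero F" and "F \<noteq> {}"
  shows "mv_one neg zero \<in> F"
proof -
  obtain x where "x \<in> F" using assms(3) by blast
  moreover have "mv_le oplus neg zero x (mv_one neg zero)"
    using assms(1) unfolding mv_algebra_def mv_le_def mv_imp_def mv_one_def by blast
  ultimately show ?thesis
    using assms(2) unfolding upward_closed_def by blast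
qed

lemma mv_one_in_kernel:
  assumes "mv_algebra oplus neg zero"
  shows "mv_one neg zero \<in> kernel oplus neg F"
  unfolding kernel_def using mv_imp_one_left[OF assms] by simp

text \<open>If the top element lies in H \<inter> G, then H \<sqsubseteq>\<rightarrow> G is contained in G:
  an element z outside G fails the condition indexed by z itself.\<close>
lemma sqimp_subset:
  assumes "mv_algebra oplus neg zero"
    and "mv_one neg zero \<in> H \<inter> G"
  shows "sqimp oplus neg H G \<subseteq> G"
proof
  fix z assume z: "z \<in> sqimp oplus neg H G"
  show "z \<in> G"
  proof (rule ccontr)
    assume "z \<notin> G"
    then have "mv_imp oplus neg z z \<notin> H \<inter> G"
      using z unfolding sqimp_def sub_at_def by blast
    then show False
      using assms(2) mv_imp_self[OF assms(1)] by simp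
  qed
qed

text \<open>An upward-closed set G is contained in H \<sqsubseteq>\<rightarrow> G for every H inside the
  kernel of G: for z \<in> G and a \<notin> G, the element (z \<rightarrow> a) \<rightarrow> a lies above z,
  hence in G, so z \<rightarrow> a cannot belong to the kernel.\<close>
lemma subset_sqimp_of_kernel:
  assumes "mv_algebra oplus neg zero"
    and "upward_closed oplus neg zero G"
    and "H \<subseteq> kernel oplus neg G"
  shows "G \<subseteq> sqimp oplus neg H G"
proof
  fix z assume z: "z \<in> G"
  have "mv_imp oplus neg z a \<notin> H" if a: "a \<notin> G" for a
  proof
    assume "mv_imp oplus neg z a \<in> H"
    then have "mv_imp oplus neg (mv_imp oplus neg z a) a \<notin> G"
      using a assms(3) unfolding kernel_def by blast
    moreover have "mv_imp oplus neg (mv_imp oplus neg z a) a \<in> G"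
      using z assms(2) mv_le_imp_imp[OF assms(1)] unfolding upward_closed_def by blast
    ultimately show False by blast
  qed
  then show "z \<in> sqimp oplus neg H G"
    unfolding sqimp_def sub_at_def by blast
qed

theorem mainTheorem5:
  fixes oplus :: "'a \<Rightarrow> 'a \<Rightarrow> 'a" and neg :: "'a \<Rightarrow> 'a" and zero :: 'a
    and F :: "'a set"
  assumes "mv_algebra oplus neg zero"
    and "prime_lattice_filter oplus neg zero F"
  shows "sqimp oplus neg (kernel oplus neg F) F = F"
proof -
  have up: "upward_closed oplus neg zero F" and ne: "F \<noteq> {}"
    using assms(2) unfolding prime_lattice_filter_def lattice_filter_def by auto
  have "mv_one neg zero \<in> kernel oplus neg F \<inter> F"
    using mv_one_in_kernel[OF assms(1)] mv_one_in_upward_closed[OF assms(1) up ne] by blast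
  then have "sqimp oplus neg (kernel oplus neg F) F \<subseteq> F"
    by (rule sqimp_subset[OF assms(1)])
  moreover have "F \<subseteq> sqimp oplus neg (kernel oplus neg F) F"
    by (rule subset_sqimp_of_kernel[OF assms(1) up order_refl])
  ultimately show ?thesis by blast
qed

end
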